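(* Let $n\geq 2$ and let $C$ be an all-ones CRC in $G_n$ with covering radius $\rho\geq 1$, $c_1=1$, $\mathbf{0}\in C$ and $-e_n\in C$. Then for any two distinct slice pairs $A,B\subseteq C$ lying in the same $s$-slice, $d(x,y)\geq 4$ for all $x\in A$, $y\in B$.
   Context: $G_n$: vertex set $\mathbb{Z}^n$, $x\sim y$ iff $\sum_i|x_i-y_i|=1$, $d$ its distance; $e_i$ the $i$-th unit vector. For a code $C$ with covering radius $\rho$, $C_i=\{v:d(v,C)=i\}$. $C$ is a CRC if for all $i,j$ every vertex of $C_i$ has the same number $\alpha_{ij}$ of neighbours in $C_j$, with $\alpha_{ij}=0$ for $|i-j|>1$; $a_i=\alpha_{ii}$, $c_i=\alpha_{i,i-1}$. $C$ is all-ones if $a_i=1$ for all $i$. For $s\in\mathbb{Z}$, the $s$-slice is $\{x: x_n\in\{2s,2s-1\}\}$; a slice pair is $\{x,x-e_n\}$ with $x_n=2s$ for some $s$. *)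

theory Defs
  imports Main
begin

text \<open>Vertices of G_n = Z^n are represented as functions nat => int that vanish
  outside the coordinates 0..n-1. Coordinate i-1 here is the paper's coordinate i,
  so the paper's e_n is the unit vector at index n-1.\<close>

definition vertices :: "nat \<Rightarrow> (nat \<Rightarrow> int) set" where
  "vertices n = {x. \<forall>i\<ge>n. x i = 0}"

definition gdist :: "nat \<Rightarrow> (nat \<Rightarrow> int) \<Rightarrow> (nat \<Rightarrow> int) \<Rightarrow> nat" where
  "gdist n x y = (\<Sum>i<n. nat \<bar>x i - y i\<bar>)"

definition adj :: "nat \<Rightarrow> (nat \<Rightarrow> int) \<Rightarrow> (nat \<Rightarrow> int) \<Rightarrow> bool" where
  "adj n x y \<longleftrightarrow> gdist n x y = 1"

definition unit_vec :: "nat \<Rightarrow> nat \<Rightarrow> int" where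
  "unit_vec i = (\<lambda>j. if j = i then 1 else 0)"

definition dist_code :: "nat \<Rightarrow> (nat \<Rightarrow> int) set \<Rightarrow> (nat \<Rightarrow> int) \<Rightarrow> nat" where
  "dist_code n C v = Inf {gdist n c v | c. c \<in> C}"

definition covering_radius :: "nat \<Rightarrow> (nat \<Rightarrow> int) set \<Rightarrow> nat \<Rightarrow> bool" where
  "covering_radius n C \<rho> \<longleftrightarrow> C \<noteq> {} \<and> C \<subseteq> vertices n \<and>
     (\<forall>v\<in>vertices n. dist_code n C v \<le> \<rho>) \<and> (\<exists>v\<in>vertices n. dist_code n C v = \<rho>)"

definition layer :: "nat \<Rightarrow> (nat \<Rightarrow> int) set \<Rightarrow> nat \<Rightarrow> (nat \<Rightarrow> int) set" where
  "layer n C i = {v \<in> vertices n. dist_code n C v = i}"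

definition nbrs_in :: "nat \<Rightarrow> (nat \<Rightarrow> int) set \<Rightarrow> (nat \<Rightarrow> int) \<Rightarrow> nat" where
  "nbrs_in n S v = card {w \<in> S. adj n v w}"

definition is_CRC :: "nat \<Rightarrow> (nat \<Rightarrow> int) set \<Rightarrow> (nat \<Rightarrow> nat \<Rightarrow> nat) \<Rightarrow> bool" where
  "is_CRC n C \<alpha> \<longleftrightarrow>
     (\<forall>i j. \<forall>v\<in>layer n C i. nbrs_in n (layer n C j) v = \<alpha> i j) \<and>
     (\<forall>i j. (i > j + 1 \<or> j > i + 1) \<longrightarrow> \<alpha> i j = 0)"

definition all_ones_CRC :: "nat \<Rightarrow> (nat \<Rightarrow> int) set \<Rightarrow> nat \<Rightarrow> (nat \<Rightarrow> nat \<Rightarrow> nat) \<Rightarrow> bool" where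
  "all_ones_CRC n C \<rho> \<alpha> \<longleftrightarrow> is_CRC n C \<alpha> \<and> (\<forall>i\<le>\<rho>. \<alpha> i i = 1)"

definition slice :: "nat \<Rightarrow> int \<Rightarrow> (nat \<Rightarrow> int) set" where
  "slice n s = {x \<in> vertices n. x (n - 1) = 2 * s \<or> x (n - 1) = 2 * s - 1}"

definition slice_pair :: "nat \<Rightarrow> (nat \<Rightarrow> int) set \<Rightarrow> bool" where
  "slice_pair n A \<longleftrightarrow> (\<exists>x\<in>vertices n. \<exists>s. x (n - 1) = 2 * s \<and>
       A = {x, x - unit_vec (n - 1)})"

end

theory Submission
  imports Defs
begin

text \<open>Write A = {x, x - e_n} and B = {y, y - e_n}. Since x and y have the same last
  coordinate, every distance between A and B is at least d(x, y), so it suffices to exclude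
  d(x, y) \<le> 3. Distance 1 is impossible because x - e_n is the only codeword next to x
  (a_0 = 1). Distance 2 is impossible because a vertex between the two codewords would
  have two code neighbours (a_0 = 1 or c_1 = 1). For distance 3, step from x towards y to
  a vertex u of C_1; then u has two distinct neighbours in C_1: u - e_n, which lies next to
  the codeword x - e_n, and the next vertex on the way to y, which lies next to y.
  This contradicts a_1 = 1.\<close>

lemma gdist_commute: "gdist n x y = gdist n y x"
  unfolding gdist_def by (simp add: abs_minus_commute)

lemma gdist_self [simp]: "gdist n x x = 0"
  unfolding gdist_def by simp

lemma adj_commute: "adj n x y \<longleftrightarrow> adj n y x"
  unfolding adj_def by (simp add: gdist_commute)

lemma gdist_fun_upd:
  assumes "k < n"
  shows "int (gdist n (x(k := v)) (y(k := w))) = int (gdist n x y) - \<bar>x k - y k\<bar> + \<bar>v - w\<bar>"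
proof -
  have split: "gdist n x y = nat \<bar>x k - y k\<bar> + (\<Sum>j\<in>{..<n} - {k}. nat \<bar>x j - y j\<bar>)" for x y
    unfolding gdist_def using assms by (simp add: sum.remove)
  have "(\<Sum>j\<in>{..<n} - {k}. nat \<bar>(x(k := v)) j - (y(k := w)) j\<bar>) =
      (\<Sum>j\<in>{..<n} - {k}. nat \<bar>x j - y j\<bar>)"
    by (rule sum.cong) auto
  then show ?thesis
    using split[of "x(k := v)" "y(k := w)"] split[of x y] by simp
qed

lemma gdist_eq_0_iff:
  assumes "x \<in> vertices n" "y \<in> vertices n"
  shows "gdist n x y = 0 \<longleftrightarrow> x = y"
proof
  assume dist: "gdist n x y = 0"
  show "x = y"
  proof
    fix j
    show "x j = y j"
    proof (cases "j < n")
      case True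
      with dist show ?thesis
        unfolding gdist_def by (simp add: sum_eq_0_iff)
    next
      case False
      with assms show ?thesis
        unfolding vertices_def by simp
    qed
  qed
qed simp

lemma fun_upd_in_vertices: "x \<in> vertices n \<Longrightarrow> k < n \<Longrightarrow> x(k := v) \<in> vertices n"
  unfolding vertices_def by auto

lemma gdist_fun_upd_ge:
  assumes "k < n" "x k = y k"
  shows "gdist n x y \<le> gdist n (x(k := v)) (y(k := w))"
  using gdist_fun_upd[OF assms(1), of x v y w] assms(2) by simp

lemma adj_fun_upd_both:
  assumes "k < n" "x k = y k" "adj n x y"
  shows "adj n (x(k := v)) (y(k := v))"
  using gdist_fun_upd[OF assms(1), of x v y v] assms(2,3) unfolding adj_def by simp

lemma adj_fun_upd:
  assumes "k < n" "\<bar>\<delta>\<bar> = 1"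
  shows "adj n x (x(k := x k + \<delta>))"
  using gdist_fun_upd[OF assms(1), of x "x k + \<delta>" x "x k"] assms(2)
  unfolding adj_def by (simp add: gdist_commute)

lemma step_towards:
  assumes "x \<in> vertices n" "gdist n x y = Suc m"
  obtains z where "z \<in> vertices n" "adj n x z" "gdist n z y = m"
    and "\<And>k. x k = y k \<Longrightarrow> z k = x k"
proof -
  obtain i where i: "i < n" "x i \<noteq> y i"
  proof (rule ccontr)
    assume "\<not> thesis"
    with that have "\<forall>i<n. x i = y i" by blast
    then have "gdist n x y = 0" unfolding gdist_def by simp
    with assms(2) show False by simp
  qed
  define z where "z = x(i := x i + sgn (y i - x i))"
  have unit: "\<bar>sgn (y i - x i)\<bar> = 1"
    using i(2) by (simp add: abs_sgn_eq)
  show thesis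
  proof (rule that)
    show "z \<in> vertices n"
      unfolding z_def using fun_upd_in_vertices[OF assms(1) i(1)] .
    show "adj n x z"
      unfolding z_def using adj_fun_upd[OF i(1) unit] .
    have "int (gdist n z y) = int m"
      using gdist_fun_upd[OF i(1), of x "x i + sgn (y i - x i)" y "y i"] assms(2) i(2)
      by (cases "x i < y i") (auto simp: z_def sgn_if)
    then show "gdist n z y = m"
      by simp
    show "z k = x k" if "x k = y k" for k
      using that i(2) unfolding z_def by auto
  qed
qed

lemma code_in_layer_0:
  assumes "C \<subseteq> vertices n" "c \<in> C"
  shows "c \<in> layer n C 0"
proof -
  have "0 \<in> {gdist n c' c | c'. c' \<in> C}"
    using assms(2) by force
  then have "Inf {gdist n c' c | c'. c' \<in> C} \<le> 0"
    by (rule cInf_lower) simp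
  then have "dist_code n C c = 0"
    unfolding dist_code_def by simp
  then show ?thesis
    using assms unfolding layer_def by auto
qed

lemma layer_1_if_adj_code:
  assumes "C \<subseteq> vertices n" "v \<in> vertices n" "v \<notin> C" "c \<in> C" "adj n v c"
  shows "v \<in> layer n C 1"
proof -
  let ?D = "{gdist n c' v | c'. c' \<in> C}"
  have "1 \<in> ?D"
    using assms(4,5) unfolding adj_def by (force simp: gdist_commute)
  then have "Inf ?D \<in> ?D"
    by (intro Inf_nat_def1) blast
  moreover have "0 \<notin> ?D"
    using assms(1-3) gdist_eq_0_iff by fastforce
  ultimately have "Inf ?D \<noteq> 0"
    by force
  moreover have "Inf ?D \<le> 1"
    using \<open>1 \<in> ?D\<close> by (rule cInf_lower) simp
  ultimately have "Inf ?D = 1"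
    by simp
  then show ?thesis
    using assms(2) unfolding layer_def dist_code_def by simp
qed

lemma card_eq_1_unique:
  assumes "card {w \<in> S. P w} = 1" "w\<^sub>1 \<in> S" "P w\<^sub>1" "w\<^sub>2 \<in> S" "P w\<^sub>2"
  shows "w\<^sub>1 = w\<^sub>2"
proof -
  obtain u where u: "{w \<in> S. P w} = {u}"
    using assms(1) card_1_singletonE by blast
  have "w\<^sub>1 \<in> {u}" "w\<^sub>2 \<in> {u}"
    unfolding u[symmetric] using assms(2-5) by simp_all
  then show ?thesis
    by simp
qed

locale all_ones_crc_c1 =
  fixes n :: nat and C :: "(nat \<Rightarrow> int) set" and \<alpha> :: "nat \<Rightarrow> nat \<Rightarrow> nat"
  assumes code_in_vertices: "C \<subseteq> vertices n"
    and crc: "is_CRC n C \<alpha>"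
    and a\<^sub>0: "\<alpha> 0 0 = 1" and c\<^sub>1: "\<alpha> 1 0 = 1" and a\<^sub>1: "\<alpha> 1 1 = 1"
begin

lemma code_neighbour_unique:
  assumes "c \<in> C" "c\<^sub>1 \<in> C" "c\<^sub>2 \<in> C" "adj n c c\<^sub>1" "adj n c c\<^sub>2"
  shows "c\<^sub>1 = c\<^sub>2"
proof -
  have "nbrs_in n (layer n C 0) c = 1"
    using crc a\<^sub>0 code_in_layer_0[OF code_in_vertices assms(1)] unfolding is_CRC_def by auto
  then show ?thesis
    using card_eq_1_unique[of "layer n C 0" "adj n c" c\<^sub>1 c\<^sub>2] assms
      code_in_layer_0[OF code_in_vertices] unfolding nbrs_in_def by auto
qed

lemma covering_codeword_unique:
  assumes "v \<in> vertices n" "v \<notin> C" "c\<^sub>1 \<in> C" "c\<^sub>2 \<in> C" "adj n v c\<^sub>1" "adj n v c\<^sub>2"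
  shows "c\<^sub>1 = c\<^sub>2"
proof -
  have "nbrs_in n (layer n C 0) v = 1"
    using crc c\<^sub>1 layer_1_if_adj_code[OF code_in_vertices assms(1,2,3,5)]
    unfolding is_CRC_def by auto
  then show ?thesis
    using card_eq_1_unique[of "layer n C 0" "adj n v" c\<^sub>1 c\<^sub>2] assms
      code_in_layer_0[OF code_in_vertices] unfolding nbrs_in_def by auto
qed

lemma layer_1_neighbour_unique:
  assumes "v \<in> layer n C 1" "w\<^sub>1 \<in> layer n C 1" "w\<^sub>2 \<in> layer n C 1"
    and "adj n v w\<^sub>1" "adj n v w\<^sub>2"
  shows "w\<^sub>1 = w\<^sub>2"
proof -
  have "nbrs_in n (layer n C 1) v = 1"
    using crc a\<^sub>1 assms(1) unfolding is_CRC_def by auto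
  then show ?thesis
    using card_eq_1_unique[of "layer n C 1" "adj n v" w\<^sub>1 w\<^sub>2] assms unfolding nbrs_in_def by auto
qed

lemma not_in_code_if_adj_off_partner:
  assumes "c \<in> C" "p \<in> C" "adj n c p" "adj n c u" "u \<noteq> p"
  shows "u \<notin> C"
  using code_neighbour_unique[OF assms(1) _ assms(2) _ assms(3)] assms(4,5) by blast

lemma no_codewords_at_distance_2:
  assumes "a \<in> C" "b \<in> C"
  shows "gdist n a b \<noteq> 2"
proof
  assume dist: "gdist n a b = 2"
  have "a \<in> vertices n"
    using assms(1) code_in_vertices by blast
  moreover have "gdist n a b = Suc 1"
    using dist by simp
  ultimately obtain z where z: "z \<in> vertices n" "adj n a z" "gdist n z b = 1"
    by (rule step_towards)
  then have za: "adj n z a" and zb: "adj n z b"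
    unfolding adj_def by (simp_all add: gdist_commute)
  have "a = b"
  proof (cases "z \<in> C")
    case True
    show ?thesis using code_neighbour_unique[OF True assms za zb] .
  next
    case False
    show ?thesis using covering_codeword_unique[OF z(1) False assms za zb] .
  qed
  with dist show False
    by simp
qed

lemma no_aligned_codewords_at_distance_3:
  assumes "a \<in> C" "b \<in> C" "k < n" "a k = b k" "\<bar>\<delta>\<bar> = 1" "a(k := a k + \<delta>) \<in> C"
  shows "gdist n a b \<noteq> 3"
proof
  assume dist: "gdist n a b = 3"
  define p where "p = a(k := a k + \<delta>)"
  have pC: "p \<in> C" and ap: "adj n a p"
    unfolding p_def using assms(6) adj_fun_upd[OF assms(3,5)] by simp_all
  have "a \<in> vertices n" "gdist n a b = Suc 2"
    using assms(1) code_in_vertices dist by auto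
  then obtain u where u: "u \<in> vertices n" "adj n a u" "gdist n u b = 2" "u k = a k"
    using step_towards assms(4) by metis
  have "u \<noteq> p"
    using u(4) assms(5) unfolding p_def by (auto dest: fun_cong[of _ _ k])
  then have uC: "u \<notin> C"
    using not_in_code_if_adj_off_partner[OF assms(1) pC ap u(2)] by blast
  have ua: "adj n u a"
    using u(2) adj_commute by blast
  have u1: "u \<in> layer n C 1"
    using layer_1_if_adj_code[OF code_in_vertices u(1) uC assms(1) ua] .
  define u' where "u' = u(k := a k + \<delta>)"
  have u'v: "u' \<in> vertices n"
    unfolding u'_def using fun_upd_in_vertices[OF u(1) assms(3)] .
  have uu': "adj n u u'"
    unfolding u'_def using adj_fun_upd[OF assms(3,5), of u] u(4) by simp
  have pu': "adj n p u'"
    unfolding p_def u'_def using adj_fun_upd_both[OF assms(3) _ u(2)] u(4) by simp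
  have "u' \<noteq> a"
    using assms(5) unfolding u'_def by (auto dest: fun_cong[of _ _ k])
  then have u'C: "u' \<notin> C"
    using not_in_code_if_adj_off_partner[OF pC assms(1) _ pu'] ap adj_commute by blast
  have u'1: "u' \<in> layer n C 1"
    using layer_1_if_adj_code[OF code_in_vertices u'v u'C pC] pu' adj_commute by blast
  have "gdist n u b = Suc 1" "u k = b k"
    using u(3,4) assms(4) by simp_all
  then obtain w where w: "w \<in> vertices n" "adj n u w" "gdist n w b = 1" "w k = u k"
    using step_towards[OF u(1)] by metis
  have "w \<noteq> a"
    using w(3) dist by auto
  then have wC: "w \<notin> C"
    using covering_codeword_unique[OF u(1) uC assms(1) _ ua w(2)] by blast
  have w1: "w \<in> layer n C 1"
    using layer_1_if_adj_code[OF code_in_vertices w(1) wC assms(2)] w(3) unfolding adj_def .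
  have "u' = w"
    using layer_1_neighbour_unique[OF u1 u'1 w1 uu' w(2)] .
  moreover have "u' k \<noteq> w k"
    using w(4) u(4) assms(5) unfolding u'_def by auto
  ultimately show False
    by simp
qed

lemma aligned_codewords_far:
  assumes "x \<in> C" "y \<in> C" "x \<noteq> y" "k < n" "x k = y k" "\<bar>\<delta>\<bar> = 1" "x(k := x k + \<delta>) \<in> C"
  shows "4 \<le> gdist n x y"
proof -
  have "gdist n x y \<noteq> 0"
    using assms(1-3) code_in_vertices gdist_eq_0_iff by blast
  moreover have "gdist n x y \<noteq> 1"
  proof
    assume "gdist n x y = 1"
    then have "y = x(k := x k + \<delta>)"
      using code_neighbour_unique[OF assms(1,2,7)] adj_fun_upd[OF assms(4,6)]
      unfolding adj_def by blast
    then show False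
      using assms(5,6) by (auto dest: fun_cong[of _ _ k])
  qed
  moreover have "gdist n x y \<noteq> 2"
    using no_codewords_at_distance_2[OF assms(1,2)] .
  moreover have "gdist n x y \<noteq> 3"
    using no_aligned_codewords_at_distance_3[OF assms(1,2,4,5,6,7)] .
  ultimately show ?thesis
    by linarith
qed

end

lemma slice_pair_upper_end:
  assumes "slice_pair n A" "A \<subseteq> slice n s"
  obtains x where "x (n - 1) = 2 * s" "A = {x, x(n - 1 := 2 * s - 1)}"
proof -
  obtain x t where x: "x (n - 1) = 2 * t" "A = {x, x - unit_vec (n - 1)}"
    using assms(1) unfolding slice_pair_def by blast
  have "x (n - 1) = 2 * s \<or> x (n - 1) = 2 * s - 1"
    using assms(2) x(2) unfolding slice_def by auto
  with x(1) have "t = s"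
    by presburger
  moreover have "x - unit_vec (n - 1) = x(n - 1 := 2 * t - 1)"
    using x(1) by (auto simp: unit_vec_def)
  ultimately show thesis
    using that x by simp
qed

theorem mainTheorem9:
  fixes n \<rho> :: nat and C A B :: "(nat \<Rightarrow> int) set" and \<alpha> :: "nat \<Rightarrow> nat \<Rightarrow> nat"
    and s :: int
  assumes "n \<ge> 2"
    and "covering_radius n C \<rho>" and "\<rho> \<ge> 1"
    and "all_ones_CRC n C \<rho> \<alpha>"
    and "\<alpha> 1 0 = 1"
    and "(\<lambda>_. 0) \<in> C"
    and "- unit_vec (n - 1) \<in> C"
    and "slice_pair n A" and "slice_pair n B" and "A \<noteq> B"
    and "A \<subseteq> C" and "B \<subseteq> C"
    and "A \<subseteq> slice n s" and "B \<subseteq> slice n s"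
  shows "\<forall>x\<in>A. \<forall>y\<in>B. gdist n x y \<ge> 4"
proof -
  define k where "k = n - 1"
  have k: "k < n"
    using \<open>n \<ge> 2\<close> by (simp add: k_def)
  interpret all_ones_crc_c1 n C \<alpha>
    using assms(2-5) by unfold_locales (auto simp: covering_radius_def all_ones_CRC_def)
  obtain x where x: "x k = 2 * s" "A = {x, x(k := 2 * s - 1)}"
    using slice_pair_upper_end[OF \<open>slice_pair n A\<close> \<open>A \<subseteq> slice n s\<close>] unfolding k_def .
  obtain y where y: "y k = 2 * s" "B = {y, y(k := 2 * s - 1)}"
    using slice_pair_upper_end[OF \<open>slice_pair n B\<close> \<open>B \<subseteq> slice n s\<close>] unfolding k_def .
  have "4 \<le> gdist n x y"
  proof (rule aligned_codewords_far[of x y k "-1"])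
    show "x \<in> C" "y \<in> C" "x(k := x k + - 1) \<in> C"
      using \<open>A \<subseteq> C\<close> \<open>B \<subseteq> C\<close> x y by auto
    show "x \<noteq> y"
      using \<open>A \<noteq> B\<close> x y by auto
  qed (use k x y in simp_all)
  show ?thesis
  proof (intro ballI)
    fix a b
    assume "a \<in> A" "b \<in> B"
    then have "x(k := a k) = a" "y(k := b k) = b"
      using x y by auto
    moreover have "gdist n x y \<le> gdist n (x(k := a k)) (y(k := b k))"
      using gdist_fun_upd_ge[OF k] x(1) y(1) by simp
    ultimately show "4 \<le> gdist n a b"
      using \<open>4 \<le> gdist n x y\<close> by simp
  qed
qed

end
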